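(* The generalized categories (as 0-cells), the functors between them (as 1-cells), and the natural transformations between such functors (as 2-cells) form a strict 2-category. Here 1-cells compose by composition of maps; vertical composition of natural transformations $\alpha: F \Rightarrow G$ and $\beta: G \Rightarrow H$ between functors $F,G,H:\mathcal{C}\to\mathcal{D}$ is $(\beta \circ \alpha)(x) = \beta(x)\cdot\alpha(x)$; the identity 2-cell on $F$ is $x \mapsto 1_{F(x)}$; and horizontal composition $\beta\star\alpha$ of $\alpha: F\Rightarrow G$ (with $F,G:\mathcal{C}\to\mathcal{D}$) and $\beta: F'\Rightarrow G'$ (with $F',G':\mathcal{D}\to\mathcal{E}$) is given by the same formula as for ordinary categories, $(\beta\star\alpha)(x) = G'(\alpha(x))\cdot \beta(F(x))$.
   Context: A generalized category is a tuple $(\mathcal{C},\le,s,t,\cdot)$ where $\mathcal{C}$ is a set, $\le$ a relation on $\mathcal{C}$, $s,t:\mathcal{C}\to\mathcal{C}$ maps (write $\bar a = s(a)$, $\hat a = t(a)$), and $\cdot$ a partially defined binary operation (write $ab$), such that: (1) $\le$ is a partial order; (2) $ab$ is defined iff $s(a)\le t(b)$; (3) if $(ab)c$ or $a(bc)$ is defined then $(ab)c=a(bc)$; (4) if $ab$ is defined then $s(ab)=s(b)$ and $t(ab)=t(a)$; (5) for every $a$ there is $b$ with $s(b)=t(b)=a$ such that $bc=c$ whenever $bc$ is defined and $cb=c$ whenever $cb$ is defined; this $b$ is unique, denoted $1_a$; (6) if $s(a)=t(a)=a$ then $ba=b$ whenever $ba$ is defined and $ab=b$ whenever $ab$ is defined;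 (7) if $a\le b$ then $s(a)\le s(b)$, $t(a)\le t(b)$ and $1_a\le 1_b$; and if $a\le b$, $c\le d$ and $ac,bd$ are defined then $ac\le bd$. A functor $F:\mathcal{C}\to\mathcal{D}$ is a map with $a\le b\Rightarrow F(a)\le F(b)$, $F(\bar a)=\overline{F(a)}$, $F(\hat a)=\widehat{F(a)}$, $F(ab)=F(a)F(b)$ whenever $ab$ is defined, and $F(1_a)=1_{F(a)}$. For functors $F,G:\mathcal{C}\to\mathcal{D}$, a natural transformation $F\Rightarrow G$ is a pair $(\theta_1,\theta_2)$ of maps $\mathcal{C}\to\mathcal{D}$ such that for all $a$, $\theta_1(a)F(a)$ and $G(a)\theta_2(a)$ are defined and equal, $\theta_1(a)=\theta_1(b)$ whenever $\hat a=\hat b$, and $\theta_2(a)=\theta_2(b)$ whenever $\bar a=\bar b$. Then $\theta_1(1_x)=\theta_2(1_x)$ for all $x$, and the transformation is identified with the single map $\theta(x):=\theta_1(1_x)$, which satisfies $\theta(\hat f)\cdot F(f)=G(f)\cdot\theta(\bar f)$ for all $f$. *)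

theory Defs
  imports Main
begin

text \<open>The composition is
  represented by a total function; it is regarded as defined exactly when
  the source of the first argument is below the target of the second.\<close>

record 'a gcat =
  gobj :: "'a set"
  gle  :: "'a \<Rightarrow> 'a \<Rightarrow> bool"
  gsrc :: "'a \<Rightarrow> 'a"
  gtgt :: "'a \<Rightarrow> 'a"
  gcmp :: "'a \<Rightarrow> 'a \<Rightarrow> 'a"

definition gdef :: "'a gcat \<Rightarrow> 'a \<Rightarrow> 'a \<Rightarrow> bool" where
  "gdef C a b \<longleftrightarrow> gle C (gsrc C a) (gtgt C b)"

definition is_unit :: "'a gcat \<Rightarrow> 'a \<Rightarrow> 'a \<Rightarrow> bool" where
  "is_unit C a b \<longleftrightarrow> b \<in> gobj C \<and> gsrc C b = a \<and> gtgt C b = a \<and>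
     (\<forall>c\<in>gobj C. gdef C b c \<longrightarrow> gcmp C b c = c) \<and>
     (\<forall>c\<in>gobj C. gdef C c b \<longrightarrow> gcmp C c b = c)"

definition gid :: "'a gcat \<Rightarrow> 'a \<Rightarrow> 'a" where
  "gid C a = (THE b. is_unit C a b)"

definition generalized_category :: "'a gcat \<Rightarrow> bool" where
  "generalized_category C \<longleftrightarrow>
     (\<forall>a\<in>gobj C. gsrc C a \<in> gobj C \<and> gtgt C a \<in> gobj C) \<and>
     \<comment> \<open>(1) partial order\<close>
     (\<forall>a\<in>gobj C. gle C a a) \<and>
     (\<forall>a\<in>gobj C. \<forall>b\<in>gobj C. gle C a b \<longrightarrow> gle C b a \<longrightarrow> a = b) \<and>
     (\<forall>a\<in>gobj C. \<forall>b\<in>gobj C. \<forall>c\<in>gobj C. gle C a b \<longrightarrow> gle C b c \<longrightarrow> gle C a c) \<and>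
     \<comment> \<open>(2) composition is defined iff s(a) <= t(b), and then lies in the carrier\<close>
     (\<forall>a\<in>gobj C. \<forall>b\<in>gobj C. gdef C a b \<longrightarrow> gcmp C a b \<in> gobj C) \<and>
     \<comment> \<open>(3) associativity\<close>
     (\<forall>a\<in>gobj C. \<forall>b\<in>gobj C. \<forall>c\<in>gobj C.
        ((gdef C a b \<and> gdef C (gcmp C a b) c) \<or> (gdef C b c \<and> gdef C a (gcmp C b c))) \<longrightarrow>
        (gdef C a b \<and> gdef C (gcmp C a b) c \<and> gdef C b c \<and> gdef C a (gcmp C b c) \<and>
         gcmp C (gcmp C a b) c = gcmp C a (gcmp C b c))) \<and>
     \<comment> \<open>(4)\<close>
     (\<forall>a\<in>gobj C. \<forall>b\<in>gobj C. gdef C a b \<longrightarrow>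
        gsrc C (gcmp C a b) = gsrc C b \<and> gtgt C (gcmp C a b) = gtgt C a) \<and>
     \<comment> \<open>(5) unique identities\<close>
     (\<forall>a\<in>gobj C. \<exists>!b. is_unit C a b) \<and>
     \<comment> \<open>(6)\<close>
     (\<forall>a\<in>gobj C. gsrc C a = a \<and> gtgt C a = a \<longrightarrow>
        (\<forall>b\<in>gobj C. gdef C b a \<longrightarrow> gcmp C b a = b) \<and>
        (\<forall>b\<in>gobj C. gdef C a b \<longrightarrow> gcmp C a b = b)) \<and>
     \<comment> \<open>(7)\<close>
     (\<forall>a\<in>gobj C. \<forall>b\<in>gobj C. gle C a b \<longrightarrow>
        gle C (gsrc C a) (gsrc C b) \<and> gle C (gtgt C a) (gtgt C b) \<and> gle C (gid C a) (gid C b)) \<and>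
     (\<forall>a\<in>gobj C. \<forall>b\<in>gobj C. \<forall>c\<in>gobj C. \<forall>d\<in>gobj C.
        gle C a b \<longrightarrow> gle C c d \<longrightarrow> gdef C a c \<longrightarrow> gdef C b d \<longrightarrow>
        gle C (gcmp C a c) (gcmp C b d))"

definition gfunctor :: "'a gcat \<Rightarrow> 'b gcat \<Rightarrow> ('a \<Rightarrow> 'b) \<Rightarrow> bool" where
  "gfunctor C D F \<longleftrightarrow>
     (\<forall>a\<in>gobj C. F a \<in> gobj D) \<and>
     (\<forall>a\<in>gobj C. \<forall>b\<in>gobj C. gle C a b \<longrightarrow> gle D (F a) (F b)) \<and>
     (\<forall>a\<in>gobj C. F (gsrc C a) = gsrc D (F a)) \<and>
     (\<forall>a\<in>gobj C. F (gtgt C a) = gtgt D (F a)) \<and>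
     (\<forall>a\<in>gobj C. \<forall>b\<in>gobj C. gdef C a b \<longrightarrow> F (gcmp C a b) = gcmp D (F a) (F b)) \<and>
     (\<forall>a\<in>gobj C. F (gid C a) = gid D (F a))"

definition nat_pair :: "'a gcat \<Rightarrow> 'b gcat \<Rightarrow> ('a \<Rightarrow> 'b) \<Rightarrow> ('a \<Rightarrow> 'b) \<Rightarrow>
    ('a \<Rightarrow> 'b) \<Rightarrow> ('a \<Rightarrow> 'b) \<Rightarrow> bool" where
  "nat_pair C D F G \<theta>1 \<theta>2 \<longleftrightarrow>
     (\<forall>a\<in>gobj C. \<theta>1 a \<in> gobj D \<and> \<theta>2 a \<in> gobj D) \<and>
     (\<forall>a\<in>gobj C. gdef D (\<theta>1 a) (F a) \<and> gdef D (G a) (\<theta>2 a) \<and>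
        gcmp D (\<theta>1 a) (F a) = gcmp D (G a) (\<theta>2 a)) \<and>
     (\<forall>a\<in>gobj C. \<forall>b\<in>gobj C. gtgt C a = gtgt C b \<longrightarrow> \<theta>1 a = \<theta>1 b) \<and>
     (\<forall>a\<in>gobj C. \<forall>b\<in>gobj C. gsrc C a = gsrc C b \<longrightarrow> \<theta>2 a = \<theta>2 b)"

text \<open>2-cells F \<Rightarrow> G: maps \<theta> (on the carrier of C) arising as \<theta>(x) = \<theta>1(1_x)
  from a natural transformation (\<theta>1,\<theta>2) between functors F, G.\<close>
definition nat_trans :: "'a gcat \<Rightarrow> 'b gcat \<Rightarrow> ('a \<Rightarrow> 'b) \<Rightarrow> ('a \<Rightarrow> 'b) \<Rightarrow> ('a \<Rightarrow> 'b) \<Rightarrow> bool" where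
  "nat_trans C D F G \<theta> \<longleftrightarrow> gfunctor C D F \<and> gfunctor C D G \<and>
     (\<exists>\<theta>1 \<theta>2. nat_pair C D F G \<theta>1 \<theta>2 \<and> (\<forall>x\<in>gobj C. \<theta> x = \<theta>1 (gid C x)))"

definition eq_on :: "'a set \<Rightarrow> ('a \<Rightarrow> 'b) \<Rightarrow> ('a \<Rightarrow> 'b) \<Rightarrow> bool" where
  "eq_on A f g \<longleftrightarrow> (\<forall>x\<in>A. f x = g x)"

definition vcomp :: "'b gcat \<Rightarrow> ('a \<Rightarrow> 'b) \<Rightarrow> ('a \<Rightarrow> 'b) \<Rightarrow> 'a \<Rightarrow> 'b" where
  "vcomp D \<beta> \<alpha> = (\<lambda>x. gcmp D (\<beta> x) (\<alpha> x))"

definition idtrans :: "'b gcat \<Rightarrow> ('a \<Rightarrow> 'b) \<Rightarrow> 'a \<Rightarrow> 'b" where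
  "idtrans D F = (\<lambda>x. gid D (F x))"

definition hcomp :: "'c gcat \<Rightarrow> ('b \<Rightarrow> 'c) \<Rightarrow> ('a \<Rightarrow> 'b) \<Rightarrow> ('b \<Rightarrow> 'c) \<Rightarrow> ('a \<Rightarrow> 'b) \<Rightarrow> 'a \<Rightarrow> 'c" where
  "hcomp E G' F \<beta> \<alpha> = (\<lambda>x. gcmp E (G' (\<alpha> x)) (\<beta> (F x)))"

end

theory Submission
  imports Defs
begin

text \<open>The laws of a strict 2-category reduce to computations with composable
  chains of arrows, once a 2-cell is described by its components: a 2-cell
  \<open>\<theta> : F \<Rightarrow> G\<close> is the same as a family of arrows \<open>\<theta> x : F x \<rightarrow> G x\<close> satisfying
  the naturality square \<open>\<theta>(t a) \<cdot> F a = G a \<cdot> \<theta>(s a)\<close>. For a pair \<open>(\<theta>\<^sub>1, \<theta>\<^sub>2)\<close>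
  this follows by evaluating its defining equation at an identity \<open>1\<^sub>y\<close>:
  functors preserve identities, so \<open>\<theta>\<^sub>1(1\<^sub>y) \<cdot> 1\<^bsub>F y\<^esub> = 1\<^bsub>G y\<^esub> \<cdot> \<theta>\<^sub>2(1\<^sub>y)\<close>, and the
  unit laws give \<open>\<theta>\<^sub>1(1\<^sub>y) = \<theta>\<^sub>2(1\<^sub>y)\<close> with source \<open>F y\<close> and target \<open>G y\<close>.\<close>

lemma gcat_src_closed: "generalized_category C \<Longrightarrow> a \<in> gobj C \<Longrightarrow> gsrc C a \<in> gobj C"
  by (simp add: generalized_category_def)

lemma gcat_tgt_closed: "generalized_category C \<Longrightarrow> a \<in> gobj C \<Longrightarrow> gtgt C a \<in> gobj C"
  by (simp add: generalized_category_def)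

lemma gcat_cmp_closed:
  "generalized_category C \<Longrightarrow> a \<in> gobj C \<Longrightarrow> b \<in> gobj C \<Longrightarrow> gdef C a b \<Longrightarrow> gcmp C a b \<in> gobj C"
  unfolding generalized_category_def by blast

lemma gcat_src_cmp:
  "generalized_category C \<Longrightarrow> a \<in> gobj C \<Longrightarrow> b \<in> gobj C \<Longrightarrow> gdef C a b \<Longrightarrow>
    gsrc C (gcmp C a b) = gsrc C b"
  unfolding generalized_category_def by blast

lemma gcat_tgt_cmp:
  "generalized_category C \<Longrightarrow> a \<in> gobj C \<Longrightarrow> b \<in> gobj C \<Longrightarrow> gdef C a b \<Longrightarrow>
    gtgt C (gcmp C a b) = gtgt C a"
  unfolding generalized_category_def by blast

lemma gcat_assoc:
  assumes "generalized_category C" "a \<in> gobj C" "b \<in> gobj C" "c \<in> gobj C"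
    and "gdef C a b" "gdef C (gcmp C a b) c"
  shows "gcmp C (gcmp C a b) c = gcmp C a (gcmp C b c)"
  using assms unfolding generalized_category_def by (elim conjE) blast

lemma gdef_if_src_eq_tgt: "generalized_category C \<Longrightarrow> b \<in> gobj C \<Longrightarrow> gsrc C a = gtgt C b \<Longrightarrow> gdef C a b"
  unfolding gdef_def generalized_category_def by simp

lemma is_unit_gid: "generalized_category C \<Longrightarrow> a \<in> gobj C \<Longrightarrow> is_unit C a (gid C a)"
  unfolding gid_def generalized_category_def by (metis theI')

lemma gid_closed [simp]: "generalized_category C \<Longrightarrow> a \<in> gobj C \<Longrightarrow> gid C a \<in> gobj C"
  using is_unit_gid is_unit_def by metis

lemma gsrc_gid [simp]: "generalized_category C \<Longrightarrow> a \<in> gobj C \<Longrightarrow> gsrc C (gid C a) = a"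
  using is_unit_gid is_unit_def by metis

lemma gtgt_gid [simp]: "generalized_category C \<Longrightarrow> a \<in> gobj C \<Longrightarrow> gtgt C (gid C a) = a"
  using is_unit_gid is_unit_def by metis

lemma gcat_gid_left:
  "generalized_category C \<Longrightarrow> a \<in> gobj C \<Longrightarrow> c \<in> gobj C \<Longrightarrow> gdef C (gid C a) c \<Longrightarrow>
    gcmp C (gid C a) c = c"
  using is_unit_gid is_unit_def by metis

lemma gcat_gid_right:
  "generalized_category C \<Longrightarrow> a \<in> gobj C \<Longrightarrow> c \<in> gobj C \<Longrightarrow> gdef C c (gid C a) \<Longrightarrow>
    gcmp C c (gid C a) = c"
  using is_unit_gid is_unit_def by metis

context
  fixes C :: "'a gcat"
  assumes C: "generalized_category C"
begin

lemma gcmp_closed [simp]: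
  "a \<in> gobj C \<Longrightarrow> b \<in> gobj C \<Longrightarrow> gsrc C a = gtgt C b \<Longrightarrow> gcmp C a b \<in> gobj C"
  by (simp add: C gcat_cmp_closed gdef_if_src_eq_tgt)

lemma gsrc_gcmp [simp]:
  "a \<in> gobj C \<Longrightarrow> b \<in> gobj C \<Longrightarrow> gsrc C a = gtgt C b \<Longrightarrow> gsrc C (gcmp C a b) = gsrc C b"
  by (simp add: C gcat_src_cmp gdef_if_src_eq_tgt)

lemma gtgt_gcmp [simp]:
  "a \<in> gobj C \<Longrightarrow> b \<in> gobj C \<Longrightarrow> gsrc C a = gtgt C b \<Longrightarrow> gtgt C (gcmp C a b) = gtgt C a"
  by (simp add: C gcat_tgt_cmp gdef_if_src_eq_tgt)

lemma gcmp_assoc [simp]: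
  "a \<in> gobj C \<Longrightarrow> b \<in> gobj C \<Longrightarrow> c \<in> gobj C \<Longrightarrow> gsrc C a = gtgt C b \<Longrightarrow> gsrc C b = gtgt C c \<Longrightarrow>
    gcmp C (gcmp C a b) c = gcmp C a (gcmp C b c)"
  by (simp add: C gcat_assoc gdef_if_src_eq_tgt)

lemma gid_gcmp [simp]: "c \<in> gobj C \<Longrightarrow> gtgt C c = a \<Longrightarrow> gcmp C (gid C a) c = c"
  using C gcat_gid_left gcat_tgt_closed gdef_if_src_eq_tgt by fastforce

lemma gcmp_gid [simp]: "c \<in> gobj C \<Longrightarrow> gsrc C c = a \<Longrightarrow> gcmp C c (gid C a) = c"
  using C gcat_gid_right gcat_src_closed gdef_if_src_eq_tgt gid_closed gtgt_gid by metis

end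

lemma gfunctor_closed: "gfunctor C D F \<Longrightarrow> a \<in> gobj C \<Longrightarrow> F a \<in> gobj D"
  unfolding gfunctor_def by blast

lemma gfunctor_src: "gfunctor C D F \<Longrightarrow> a \<in> gobj C \<Longrightarrow> gsrc D (F a) = F (gsrc C a)"
  unfolding gfunctor_def by metis

lemma gfunctor_tgt: "gfunctor C D F \<Longrightarrow> a \<in> gobj C \<Longrightarrow> gtgt D (F a) = F (gtgt C a)"
  unfolding gfunctor_def by metis

lemma gfunctor_gid: "gfunctor C D F \<Longrightarrow> a \<in> gobj C \<Longrightarrow> F (gid C a) = gid D (F a)"
  unfolding gfunctor_def by blast

lemma gfunctor_cmp:
  "gfunctor C D F \<Longrightarrow> a \<in> gobj C \<Longrightarrow> b \<in> gobj C \<Longrightarrow> gdef C a b \<Longrightarrow>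
    F (gcmp C a b) = gcmp D (F a) (F b)"
  unfolding gfunctor_def by blast

lemma gfunctor_mono:
  "gfunctor C D F \<Longrightarrow> a \<in> gobj C \<Longrightarrow> b \<in> gobj C \<Longrightarrow> gle C a b \<Longrightarrow> gle D (F a) (F b)"
  unfolding gfunctor_def by blast

lemma gfunctor_gcmp:
  "gfunctor C D F \<Longrightarrow> generalized_category C \<Longrightarrow> a \<in> gobj C \<Longrightarrow> b \<in> gobj C \<Longrightarrow>
    gsrc C a = gtgt C b \<Longrightarrow> F (gcmp C a b) = gcmp D (F a) (F b)"
  by (simp add: gdef_if_src_eq_tgt gfunctor_cmp)

text \<open>Not declared [simp]: the left-hand sides have a variable head (\<open>?F ?a\<close>, \<open>?\<theta> ?x\<close>) and
  would match every term; instantiate them with the functor or transformation at hand.\<close>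

lemmas gfunctor_simps = gfunctor_closed gfunctor_src gfunctor_tgt gfunctor_gid gfunctor_gcmp

lemma gfunctor_preserves_gdef:
  assumes "generalized_category C" "gfunctor C D F" "a \<in> gobj C" "b \<in> gobj C" "gdef C a b"
  shows "gdef D (F a) (F b)"
  using assms gfunctor_mono[of C D F "gsrc C a" "gtgt C b"]
  by (simp add: gdef_def gcat_src_closed gcat_tgt_closed gfunctor_simps[OF assms(2)])

lemma gfunctor_ident: "gfunctor C C id"
  unfolding gfunctor_def by simp

lemma gfunctor_comp:
  assumes "generalized_category C" "gfunctor C D F" "gfunctor D E G"
  shows "gfunctor C E (G \<circ> F)"
  using assms unfolding gfunctor_def[of C E]
  by (auto simp: gfunctor_cmp gfunctor_mono gfunctor_preserves_gdef
      gfunctor_simps[OF assms(2)] gfunctor_simps[OF assms(3)])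

definition natural :: "'a gcat \<Rightarrow> 'b gcat \<Rightarrow> ('a \<Rightarrow> 'b) \<Rightarrow> ('a \<Rightarrow> 'b) \<Rightarrow> ('a \<Rightarrow> 'b) \<Rightarrow> bool" where
  "natural C D F G \<theta> \<longleftrightarrow> gfunctor C D F \<and> gfunctor C D G \<and>
    (\<forall>x\<in>gobj C. \<theta> x \<in> gobj D \<and> gsrc D (\<theta> x) = F x \<and> gtgt D (\<theta> x) = G x) \<and>
    (\<forall>a\<in>gobj C. gcmp D (\<theta> (gtgt C a)) (F a) = gcmp D (G a) (\<theta> (gsrc C a)))"

lemma natural_closed: "natural C D F G \<theta> \<Longrightarrow> x \<in> gobj C \<Longrightarrow> \<theta> x \<in> gobj D"
  unfolding natural_def by blast

lemma natural_src: "natural C D F G \<theta> \<Longrightarrow> x \<in> gobj C \<Longrightarrow> gsrc D (\<theta> x) = F x"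
  unfolding natural_def by blast

lemma natural_tgt: "natural C D F G \<theta> \<Longrightarrow> x \<in> gobj C \<Longrightarrow> gtgt D (\<theta> x) = G x"
  unfolding natural_def by blast

lemmas natural_simps = natural_closed natural_src natural_tgt

lemma natural_square:
  "natural C D F G \<theta> \<Longrightarrow> a \<in> gobj C \<Longrightarrow>
    gcmp D (\<theta> (gtgt C a)) (F a) = gcmp D (G a) (\<theta> (gsrc C a))"
  unfolding natural_def by blast

lemma natural_dom_functor: "natural C D F G \<theta> \<Longrightarrow> gfunctor C D F"
  unfolding natural_def by blast

lemma natural_cod_functor: "natural C D F G \<theta> \<Longrightarrow> gfunctor C D G"
  unfolding natural_def by blast

lemma nat_pair_at_gid:
  assumes C: "generalized_category C" and D: "generalized_category D"
    and F: "gfunctor C D F" and G: "gfunctor C D G" and \<theta>: "nat_pair C D F G \<theta>\<^sub>1 \<theta>\<^sub>2"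
    and y: "y \<in> gobj C"
  shows "\<theta>\<^sub>2 (gid C y) = \<theta>\<^sub>1 (gid C y)" and "gsrc D (\<theta>\<^sub>1 (gid C y)) = F y"
    and "gtgt D (\<theta>\<^sub>1 (gid C y)) = G y"
proof -
  let ?u = "gid C y"
  have u: "?u \<in> gobj C" using C y by simp
  have Fy: "F y \<in> gobj D" and Gy: "G y \<in> gobj D" using F G y by (simp_all add: gfunctor_closed)
  have in_D: "\<theta>\<^sub>1 ?u \<in> gobj D" "\<theta>\<^sub>2 ?u \<in> gobj D"
    using \<theta> u unfolding nat_pair_def by blast+
  have "gdef D (\<theta>\<^sub>1 ?u) (F ?u)" "gdef D (G ?u) (\<theta>\<^sub>2 ?u)"
    and "gcmp D (\<theta>\<^sub>1 ?u) (F ?u) = gcmp D (G ?u) (\<theta>\<^sub>2 ?u)"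
    using \<theta> u unfolding nat_pair_def by blast+
  then have def: "gdef D (\<theta>\<^sub>1 ?u) (gid D (F y))" "gdef D (gid D (G y)) (\<theta>\<^sub>2 ?u)"
    and eq: "gcmp D (\<theta>\<^sub>1 ?u) (gid D (F y)) = gcmp D (gid D (G y)) (\<theta>\<^sub>2 ?u)"
    using F G y by (simp_all add: gfunctor_gid)
  have right: "gcmp D (\<theta>\<^sub>1 ?u) (gid D (F y)) = \<theta>\<^sub>1 ?u"
    by (rule gcat_gid_right[OF D Fy in_D(1) def(1)])
  have left: "gcmp D (gid D (G y)) (\<theta>\<^sub>2 ?u) = \<theta>\<^sub>2 ?u"
    by (rule gcat_gid_left[OF D Gy in_D(2) def(2)])
  show same: "\<theta>\<^sub>2 ?u = \<theta>\<^sub>1 ?u" using eq left right by simp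
  have "gsrc D (\<theta>\<^sub>1 ?u) = gsrc D (gid D (F y))"
    using gcat_src_cmp[OF D in_D(1) gid_closed[OF D Fy] def(1)] right by simp
  then show "gsrc D (\<theta>\<^sub>1 ?u) = F y" using D Fy by simp
  have "gtgt D (\<theta>\<^sub>2 ?u) = gtgt D (gid D (G y))"
    using gcat_tgt_cmp[OF D gid_closed[OF D Gy] in_D(2) def(2)] left by simp
  then show "gtgt D (\<theta>\<^sub>1 ?u) = G y" using D Gy same by simp
qed

lemma natural_if_nat_trans:
  assumes C: "generalized_category C" and D: "generalized_category D"
    and \<theta>: "nat_trans C D F G \<theta>"
  shows "natural C D F G \<theta>"
proof -
  obtain \<theta>\<^sub>1 \<theta>\<^sub>2 where F: "gfunctor C D F" and G: "gfunctor C D G"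
    and pair: "nat_pair C D F G \<theta>\<^sub>1 \<theta>\<^sub>2" and \<theta>_eq: "\<And>x. x \<in> gobj C \<Longrightarrow> \<theta> x = \<theta>\<^sub>1 (gid C x)"
    using \<theta> unfolding nat_trans_def by blast
  have closed: "\<And>a. a \<in> gobj C \<Longrightarrow> \<theta>\<^sub>1 a \<in> gobj D"
    using pair unfolding nat_pair_def by blast
  have square: "\<And>a. a \<in> gobj C \<Longrightarrow> gcmp D (\<theta>\<^sub>1 a) (F a) = gcmp D (G a) (\<theta>\<^sub>2 a)"
    using pair unfolding nat_pair_def by blast
  have by_tgt: "\<And>a b. a \<in> gobj C \<Longrightarrow> b \<in> gobj C \<Longrightarrow> gtgt C a = gtgt C b \<Longrightarrow> \<theta>\<^sub>1 a = \<theta>\<^sub>1 b"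
    using pair unfolding nat_pair_def by blast
  have by_src: "\<And>a b. a \<in> gobj C \<Longrightarrow> b \<in> gobj C \<Longrightarrow> gsrc C a = gsrc C b \<Longrightarrow> \<theta>\<^sub>2 a = \<theta>\<^sub>2 b"
    using pair unfolding nat_pair_def by blast
  note at_gid = nat_pair_at_gid[OF C D F G pair]
  have "\<theta> x \<in> gobj D \<and> gsrc D (\<theta> x) = F x \<and> gtgt D (\<theta> x) = G x" if "x \<in> gobj C" for x
    using that C by (simp add: \<theta>_eq closed at_gid)
  moreover have "\<theta> (gtgt C a) = \<theta>\<^sub>1 a" and "\<theta> (gsrc C a) = \<theta>\<^sub>2 a" if a: "a \<in> gobj C" for a
  proof -
    have s: "gsrc C a \<in> gobj C" and t: "gtgt C a \<in> gobj C"
      using C a by (simp_all add: gcat_src_closed gcat_tgt_closed)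
    show "\<theta> (gtgt C a) = \<theta>\<^sub>1 a"
      using by_tgt[of "gid C (gtgt C a)" a] C a t by (simp add: \<theta>_eq)
    show "\<theta> (gsrc C a) = \<theta>\<^sub>2 a"
      using by_src[of "gid C (gsrc C a)" a] C a s by (simp add: \<theta>_eq at_gid(1)[symmetric])
  qed
  ultimately show ?thesis
    unfolding natural_def using F G square by simp
qed

lemma nat_trans_if_natural:
  assumes C: "generalized_category C" and D: "generalized_category D"
    and \<theta>: "natural C D F G \<theta>"
  shows "nat_trans C D F G \<theta>"
proof -
  have F: "gfunctor C D F" and G: "gfunctor C D G"
    using \<theta> by (simp_all add: natural_dom_functor natural_cod_functor)
  have "nat_pair C D F G (\<lambda>a. \<theta> (gtgt C a)) (\<lambda>a. \<theta> (gsrc C a))"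
    using C D F G \<theta> unfolding nat_pair_def
    by (auto simp: gcat_src_closed gcat_tgt_closed gdef_if_src_eq_tgt natural_square
        natural_simps[OF \<theta>] gfunctor_simps[OF F] gfunctor_simps[OF G])
  then show ?thesis
    unfolding nat_trans_def using C F G by auto
qed

lemma nat_trans_iff_natural:
  "generalized_category C \<Longrightarrow> generalized_category D \<Longrightarrow> nat_trans C D F G \<theta> \<longleftrightarrow> natural C D F G \<theta>"
  using natural_if_nat_trans nat_trans_if_natural by blast

lemma vcomp_natural:
  assumes C: "generalized_category C" and D: "generalized_category D"
    and \<alpha>: "natural C D F G \<alpha>" and \<beta>: "natural C D G H \<beta>"
  shows "natural C D F H (vcomp D \<beta> \<alpha>)"
proof -
  note F = natural_dom_functor[OF \<alpha>] and G = natural_cod_functor[OF \<alpha>]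
    and H = natural_cod_functor[OF \<beta>]
  note simps = C D natural_simps[OF \<alpha>] natural_simps[OF \<beta>]
    gfunctor_simps[OF F] gfunctor_simps[OF G] gfunctor_simps[OF H] gcat_src_closed gcat_tgt_closed
  have "gcmp D (vcomp D \<beta> \<alpha> (gtgt C a)) (F a) = gcmp D (H a) (vcomp D \<beta> \<alpha> (gsrc C a))"
    if a: "a \<in> gobj C" for a
  proof -
    have "gcmp D (vcomp D \<beta> \<alpha> (gtgt C a)) (F a) = gcmp D (\<beta> (gtgt C a)) (gcmp D (\<alpha> (gtgt C a)) (F a))"
      using a by (simp add: simps vcomp_def)
    also have "\<dots> = gcmp D (gcmp D (\<beta> (gtgt C a)) (G a)) (\<alpha> (gsrc C a))"
      using a by (simp add: simps natural_square[OF \<alpha> a])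
    also have "\<dots> = gcmp D (H a) (vcomp D \<beta> \<alpha> (gsrc C a))"
      using a by (simp add: simps natural_square[OF \<beta> a] vcomp_def)
    finally show ?thesis .
  qed
  then show ?thesis
    unfolding natural_def using F H by (simp add: simps vcomp_def)
qed

lemma idtrans_natural:
  assumes C: "generalized_category C" and D: "generalized_category D" and F: "gfunctor C D F"
  shows "natural C D F F (idtrans D F)"
  unfolding natural_def idtrans_def
  using F by (simp add: C D gfunctor_simps[OF F] gcat_src_closed gcat_tgt_closed)

lemma vcomp_assoc:
  assumes "generalized_category D"
    and \<alpha>: "natural C D F G \<alpha>" and \<beta>: "natural C D G H \<beta>" and \<gamma>: "natural C D H J \<gamma>"
    and "x \<in> gobj C"
  shows "vcomp D \<gamma> (vcomp D \<beta> \<alpha>) x = vcomp D (vcomp D \<gamma> \<beta>) \<alpha> x"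
  using assms by (simp add: vcomp_def natural_simps[OF \<alpha>] natural_simps[OF \<beta>] natural_simps[OF \<gamma>])

lemma vcomp_idtrans_left:
  assumes "generalized_category D" and \<alpha>: "natural C D F G \<alpha>" and "x \<in> gobj C"
  shows "vcomp D (idtrans D G) \<alpha> x = \<alpha> x"
  using assms by (simp add: vcomp_def idtrans_def natural_simps[OF \<alpha>])

lemma vcomp_idtrans_right:
  assumes "generalized_category D" and \<alpha>: "natural C D F G \<alpha>" and "x \<in> gobj C"
  shows "vcomp D \<alpha> (idtrans D F) x = \<alpha> x"
  using assms by (simp add: vcomp_def idtrans_def natural_simps[OF \<alpha>])

lemma hcomp_natural:
  assumes C: "generalized_category C" and D: "generalized_category D" and E: "generalized_category E"
    and \<alpha>: "natural C D F G \<alpha>" and \<beta>: "natural D E F' G' \<beta>"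
  shows "natural C E (F' \<circ> F) (G' \<circ> G) (hcomp E G' F \<beta> \<alpha>)"
proof -
  note F = natural_dom_functor[OF \<alpha>] and G = natural_cod_functor[OF \<alpha>]
    and F' = natural_dom_functor[OF \<beta>] and G' = natural_cod_functor[OF \<beta>]
  note simps = C D E natural_simps[OF \<alpha>] natural_simps[OF \<beta>] gfunctor_simps[OF F] gfunctor_simps[OF G]
    gfunctor_simps[OF F'] gfunctor_simps[OF G'] gcat_src_closed gcat_tgt_closed
  have "gcmp E (hcomp E G' F \<beta> \<alpha> (gtgt C a)) (F' (F a)) = gcmp E (G' (G a)) (hcomp E G' F \<beta> \<alpha> (gsrc C a))"
    if a: "a \<in> gobj C" for a
  proof -
    have \<beta>_square: "gcmp E (\<beta> (F (gtgt C a))) (F' (F a)) = gcmp E (G' (F a)) (\<beta> (F (gsrc C a)))"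
      using natural_square[OF \<beta> gfunctor_closed[OF F a]] a by (simp add: simps)
    have "gcmp E (hcomp E G' F \<beta> \<alpha> (gtgt C a)) (F' (F a))
        = gcmp E (G' (\<alpha> (gtgt C a))) (gcmp E (\<beta> (F (gtgt C a))) (F' (F a)))"
      using a by (simp add: simps hcomp_def)
    also have "\<dots> = gcmp E (G' (gcmp D (\<alpha> (gtgt C a)) (F a))) (\<beta> (F (gsrc C a)))"
      using a by (simp add: simps \<beta>_square)
    also have "\<dots> = gcmp E (G' (G a)) (hcomp E G' F \<beta> \<alpha> (gsrc C a))"
      using a by (simp add: simps natural_square[OF \<alpha> a] hcomp_def)
    finally show ?thesis .
  qed
  then show ?thesis
    unfolding natural_def using gfunctor_comp[OF C F F'] gfunctor_comp[OF C G G']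
    by (simp add: simps hcomp_def)
qed

lemma hcomp_assoc:
  assumes "generalized_category E" "generalized_category K"
    and \<alpha>: "natural C D F G \<alpha>" and \<beta>: "natural D E F' G' \<beta>" and \<gamma>: "natural E K F'' G'' \<gamma>"
    and x: "x \<in> gobj C"
  shows "hcomp K G'' (F' \<circ> F) \<gamma> (hcomp E G' F \<beta> \<alpha>) x = hcomp K (G'' \<circ> G') F (hcomp K G'' F' \<gamma> \<beta>) \<alpha> x"
  using assms
  by (simp add: hcomp_def natural_simps[OF \<alpha>] natural_simps[OF \<beta>] natural_simps[OF \<gamma>]
      gfunctor_simps[OF natural_dom_functor[OF \<alpha>]] gfunctor_simps[OF natural_cod_functor[OF \<alpha>]]
      gfunctor_simps[OF natural_dom_functor[OF \<beta>]] gfunctor_simps[OF natural_cod_functor[OF \<beta>]]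
      gfunctor_simps[OF natural_cod_functor[OF \<gamma>]])

lemma hcomp_idtrans_ident_left:
  assumes "generalized_category D" and \<alpha>: "natural C D F G \<alpha>" and "x \<in> gobj C"
  shows "hcomp D id F (idtrans D id) \<alpha> x = \<alpha> x"
  using assms by (simp add: hcomp_def idtrans_def natural_simps[OF \<alpha>])

lemma hcomp_idtrans_ident_right:
  assumes "generalized_category D" and \<alpha>: "natural C D F G \<alpha>"
    and "x \<in> gobj C"
  shows "hcomp D G id \<alpha> (idtrans C id) x = \<alpha> x"
  using assms
  by (simp add: hcomp_def idtrans_def natural_simps[OF \<alpha>] gfunctor_simps[OF natural_cod_functor[OF \<alpha>]])

lemma hcomp_idtrans:
  assumes "generalized_category E"
    and F: "gfunctor C D F" and F': "gfunctor D E F'" and "x \<in> gobj C"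
  shows "hcomp E F' F (idtrans E F') (idtrans D F) x = idtrans E (F' \<circ> F) x"
  using assms by (simp add: hcomp_def idtrans_def gfunctor_simps[OF F] gfunctor_simps[OF F'])

lemma interchange:
  assumes D: "generalized_category D" and E: "generalized_category E"
    and \<alpha>: "natural C D F G \<alpha>" and \<alpha>': "natural C D G H \<alpha>'"
    and \<beta>: "natural D E F' G' \<beta>" and \<beta>': "natural D E G' H' \<beta>'"
    and x: "x \<in> gobj C"
  shows "hcomp E H' F (vcomp E \<beta>' \<beta>) (vcomp D \<alpha>' \<alpha>) x
    = vcomp E (hcomp E H' G \<beta>' \<alpha>') (hcomp E G' F \<beta> \<alpha>) x"
proof -
  note simps = D E x natural_simps[OF \<alpha>] natural_simps[OF \<alpha>'] natural_simps[OF \<beta>]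
    natural_simps[OF \<beta>'] gfunctor_simps[OF natural_dom_functor[OF \<alpha>]]
    gfunctor_simps[OF natural_cod_functor[OF \<alpha>]] gfunctor_simps[OF natural_cod_functor[OF \<alpha>']]
    gfunctor_simps[OF natural_dom_functor[OF \<beta>]] gfunctor_simps[OF natural_cod_functor[OF \<beta>]]
    gfunctor_simps[OF natural_cod_functor[OF \<beta>']]
  have \<beta>'_square: "gcmp E (\<beta>' (G x)) (G' (\<alpha> x)) = gcmp E (H' (\<alpha> x)) (\<beta>' (F x))"
    using natural_square[OF \<beta>' natural_closed[OF \<alpha> x]] by (simp add: simps)
  have "hcomp E H' F (vcomp E \<beta>' \<beta>) (vcomp D \<alpha>' \<alpha>) x
      = gcmp E (H' (\<alpha>' x)) (gcmp E (gcmp E (H' (\<alpha> x)) (\<beta>' (F x))) (\<beta> (F x)))"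
    by (simp add: simps hcomp_def vcomp_def)
  also have "\<dots> = gcmp E (H' (\<alpha>' x)) (gcmp E (gcmp E (\<beta>' (G x)) (G' (\<alpha> x))) (\<beta> (F x)))"
    by (simp add: \<beta>'_square)
  also have "\<dots> = vcomp E (hcomp E H' G \<beta>' \<alpha>') (hcomp E G' F \<beta> \<alpha>) x"
    by (simp add: simps hcomp_def vcomp_def)
  finally show ?thesis .
qed

theorem mainTheorem1:
  fixes C :: "'a gcat" and D :: "'b gcat" and E :: "'c gcat" and K :: "'d gcat"
  assumes "generalized_category C" and "generalized_category D"
      and "generalized_category E" and "generalized_category K"
  shows
   \<comment> \<open>1-cells: identities, composition, associativity and unit laws\<close>
   "gfunctor C C id \<and>
    (\<forall>F G. gfunctor C D F \<longrightarrow> gfunctor D E G \<longrightarrow> gfunctor C E (G \<circ> F)) \<and>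
    (\<forall>F G H. gfunctor C D F \<longrightarrow> gfunctor D E G \<longrightarrow> gfunctor E K H \<longrightarrow>
        eq_on (gobj C) ((H \<circ> G) \<circ> F) (H \<circ> (G \<circ> F))) \<and>
    (\<forall>F. gfunctor C D F \<longrightarrow> eq_on (gobj C) (id \<circ> F) F \<and> eq_on (gobj C) (F \<circ> id) F) \<and>
   \<comment> \<open>vertical composition and identity 2-cells\<close>
    (\<forall>F G H \<alpha> \<beta>. nat_trans C D F G \<alpha> \<longrightarrow> nat_trans C D G H \<beta> \<longrightarrow>
        nat_trans C D F H (vcomp D \<beta> \<alpha>)) \<and>
    (\<forall>F. gfunctor C D F \<longrightarrow> nat_trans C D F F (idtrans D F)) \<and>
    (\<forall>F G H J \<alpha> \<beta> \<gamma>. nat_trans C D F G \<alpha> \<longrightarrow> nat_trans C D G H \<beta> \<longrightarrow> nat_trans C D H J \<gamma> \<longrightarrow>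
        eq_on (gobj C) (vcomp D \<gamma> (vcomp D \<beta> \<alpha>)) (vcomp D (vcomp D \<gamma> \<beta>) \<alpha>)) \<and>
    (\<forall>F G \<alpha>. nat_trans C D F G \<alpha> \<longrightarrow>
        eq_on (gobj C) (vcomp D (idtrans D G) \<alpha>) \<alpha> \<and> eq_on (gobj C) (vcomp D \<alpha> (idtrans D F)) \<alpha>) \<and>
   \<comment> \<open>horizontal composition\<close>
    (\<forall>F G F' G' \<alpha> \<beta>. nat_trans C D F G \<alpha> \<longrightarrow> nat_trans D E F' G' \<beta> \<longrightarrow>
        nat_trans C E (F' \<circ> F) (G' \<circ> G) (hcomp E G' F \<beta> \<alpha>)) \<and>
    (\<forall>F G F' G' F'' G'' \<alpha> \<beta> \<gamma>. nat_trans C D F G \<alpha> \<longrightarrow> nat_trans D E F' G' \<beta> \<longrightarrow>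
        nat_trans E K F'' G'' \<gamma> \<longrightarrow>
        eq_on (gobj C) (hcomp K G'' (F' \<circ> F) \<gamma> (hcomp E G' F \<beta> \<alpha>))
                       (hcomp K (G'' \<circ> G') F (hcomp K G'' F' \<gamma> \<beta>) \<alpha>)) \<and>
    (\<forall>F G \<alpha>. nat_trans C D F G \<alpha> \<longrightarrow>
        eq_on (gobj C) (hcomp D id F (idtrans D id) \<alpha>) \<alpha> \<and>
        eq_on (gobj C) (hcomp D G id \<alpha> (idtrans C id)) \<alpha>) \<and>
   \<comment> \<open>horizontal composite of identity 2-cells, and the interchange law\<close>
    (\<forall>F F'. gfunctor C D F \<longrightarrow> gfunctor D E F' \<longrightarrow>
        eq_on (gobj C) (hcomp E F' F (idtrans E F') (idtrans D F)) (idtrans E (F' \<circ> F))) \<and>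
    (\<forall>F G H F' G' H' \<alpha> \<alpha>' \<beta> \<beta>'. nat_trans C D F G \<alpha> \<longrightarrow> nat_trans C D G H \<alpha>' \<longrightarrow>
        nat_trans D E F' G' \<beta> \<longrightarrow> nat_trans D E G' H' \<beta>' \<longrightarrow>
        eq_on (gobj C) (hcomp E H' F (vcomp E \<beta>' \<beta>) (vcomp D \<alpha>' \<alpha>))
                       (vcomp E (hcomp E H' G \<beta>' \<alpha>') (hcomp E G' F \<beta> \<alpha>)))"
proof -
  note nat_trans_iff = nat_trans_iff_natural[OF assms(1,2)] nat_trans_iff_natural[OF assms(2,3)]
    nat_trans_iff_natural[OF assms(3,4)] nat_trans_iff_natural[OF assms(1,3)]
  show ?thesis
    unfolding nat_trans_iff eq_on_def
    using assms
    by (simp add: gfunctor_ident gfunctor_comp vcomp_natural idtrans_natural vcomp_assoc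
        vcomp_idtrans_left vcomp_idtrans_right hcomp_natural hcomp_assoc hcomp_idtrans_ident_left
        hcomp_idtrans_ident_right hcomp_idtrans interchange)
qed

end
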